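(* Assume conditions (C1) and (C2) stated in the context, and fix any $\varepsilon_0>0$. Then there exists a finite constant $\gamma_{\mathcal P,\varepsilon_0}>0$ such that for every pair $p,q\in\mathcal P$, \[ \mathcal G_p(R_q)\ge\varepsilon_0\ \Longrightarrow\ \mathcal L_p(R_q)-\mathcal L_p(R_p)\ge\gamma_{\mathcal P,\varepsilon_0}. \]
   Context: $\mathcal X$ is a measurable space with probability distribution $d_0$; $\mathcal A$ is a separable metric space; $\pi_0$ is a Markov kernel $\mathcal X\to\Delta(\mathcal A)$, $S_x:=\mathrm{supp}(\pi_0(\cdot\mid x))$ its topological support, $\|f\|_{\infty,\mathrm{supp}(\pi_0)}:=\sup\{|f(x,a)|:x\in\mathcal X,a\in S_x\}$. Rewards are measurable $R:\mathcal X\times\mathcal A\to\mathbb R$; $\pi_0$-centered means $\int R(x,a)\pi_0(da\mid x)=0$ for every $x$. A fixed measurable tie-breaking rule assigns to each reward $R$ a measurable $a_R$ with $a_R(x)\in\arg\max_{a\in S_x}R(x,a)$. $\mathcal P$ is a set; each $p$ induces a $\pi_0$-centered reward $R_p$; $\mathcal F_{\mathcal P}:=\{R_p:p\in\mathcal P\}$, $a_p:=a_{R_p}$. (C1) $\mathcal F_{\mathcal P}$ is compact under $\|\cdot\|_{\infty,\mathrm{supp}(\pi_0)}$, and every $R\in\mathcal F_{\mathcal P}$ has $a\mapsto R(x,a)$ continuous on $S_x$ for $d_0$-a.e. $x$. (C2) There is $\Delta^{\mathcal P}_{\min}>0$ such that for every $p$, $d_0$-a.s., $a_p(X)$ is the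 unique maximizer and $R_p(X,a_p(X))-\sup_{a\in S_X,a\neq a_p(X)}R_p(X,a)\ge\Delta^{\mathcal P}_{\min}$. Fix $K\ge2$; $\mathbf v_R(x,\mathbf a)=(R(x,a_1),\dots,R(x,a_K))$; $P_R(y=k\mid x,\mathbf a)=e^{R(x,a_k)}/\sum_\ell e^{R(x,a_\ell)}$; $\ell(\mathbf v,y)=\log\sum_ke^{v_k}-v_y$. $\mathcal L_p(R):=\mathbb E[\ell(\mathbf v_R(X,\mathbf A),Y)]$ with $X\sim d_0$, $\mathbf A\sim\pi_0(\cdot\mid X)^{\otimes K}$, $Y\sim P_{R_p}(\cdot\mid X,\mathbf A)$. $\mathcal G_p(R):=\mathbb E_{X\sim d_0}[R_p(X,a_p(X))-R_p(X,a_R(X))]$. *)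

theory Defs
  imports "HOL-Probability.Probability"
begin

definition supp :: "'a::topological_space measure \<Rightarrow> 'a set" where
  "supp M = {a. \<forall>U. open U \<longrightarrow> a \<in> U \<longrightarrow> emeasure M U > 0}"

definition supp_dist ::
  "'x measure \<Rightarrow> ('x \<Rightarrow> 'a::topological_space measure) \<Rightarrow>
   ('x \<Rightarrow> 'a \<Rightarrow> real) \<Rightarrow> ('x \<Rightarrow> 'a \<Rightarrow> real) \<Rightarrow> ereal" where
  "supp_dist d0 \<pi>0 f g =
     (SUP x\<in>space d0. SUP a\<in>supp (\<pi>0 x). ereal \<bar>f x a - g x a\<bar>)"

definition supp_open ::
  "'x measure \<Rightarrow> ('x \<Rightarrow> 'a::topological_space measure) \<Rightarrow>
   ('x \<Rightarrow> 'a \<Rightarrow> real) set \<Rightarrow> bool" where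
  "supp_open d0 \<pi>0 U \<longleftrightarrow>
     (\<forall>f\<in>U. \<exists>e>0. \<forall>g. supp_dist d0 \<pi>0 f g < ereal e \<longrightarrow> g \<in> U)"

definition supp_compact ::
  "'x measure \<Rightarrow> ('x \<Rightarrow> 'a::topological_space measure) \<Rightarrow>
   ('x \<Rightarrow> 'a \<Rightarrow> real) set \<Rightarrow> bool" where
  "supp_compact d0 \<pi>0 F \<longleftrightarrow>
     (\<forall>\<U>. (\<forall>U\<in>\<U>. supp_open d0 \<pi>0 U) \<and> F \<subseteq> \<Union>\<U> \<longrightarrow>
        (\<exists>\<V>\<subseteq>\<U>. finite \<V> \<and> F \<subseteq> \<Union>\<V>))"

definition is_reward :: "'x measure \<Rightarrow> ('x \<Rightarrow> 'a::topological_space \<Rightarrow> real) \<Rightarrow> bool" where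
  "is_reward d0 R \<longleftrightarrow> (\<lambda>(x, a). R x a) \<in> borel_measurable (d0 \<Otimes>\<^sub>M borel)"

definition centered ::
  "'x measure \<Rightarrow> ('x \<Rightarrow> 'a measure) \<Rightarrow> ('x \<Rightarrow> 'a \<Rightarrow> real) \<Rightarrow> bool" where
  "centered d0 \<pi>0 R \<longleftrightarrow>
     (\<forall>x\<in>space d0. integrable (\<pi>0 x) (R x) \<and> (\<integral>a. R x a \<partial>\<pi>0 x) = 0)"

definition is_argmax_on :: "'a set \<Rightarrow> ('a \<Rightarrow> real) \<Rightarrow> 'a \<Rightarrow> bool" where
  "is_argmax_on S f a \<longleftrightarrow> a \<in> S \<and> (\<forall>b\<in>S. f b \<le> f a)"

definition softmax_prob :: "nat \<Rightarrow> (nat \<Rightarrow> real) \<Rightarrow> nat \<Rightarrow> real" where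
  "softmax_prob K v k = exp (v k) / (\<Sum>l<K. exp (v l))"

definition ce_loss :: "nat \<Rightarrow> (nat \<Rightarrow> real) \<Rightarrow> nat \<Rightarrow> real" where
  "ce_loss K v y = ln (\<Sum>k<K. exp (v k)) - v y"

(* L_p(R) with R_p = Rtrue: E_{X~d0, A~pi0(.|X)^{\<otimes>K}, Y~P_{Rtrue}} [ l(v_R(X,A), Y) ];
   the loss is nonnegative, so the expectation is taken in [0, \<infinity>] *)
definition pref_loss ::
  "'x measure \<Rightarrow> ('x \<Rightarrow> 'a measure) \<Rightarrow> nat \<Rightarrow>
   ('x \<Rightarrow> 'a \<Rightarrow> real) \<Rightarrow> ('x \<Rightarrow> 'a \<Rightarrow> real) \<Rightarrow> ennreal" where
  "pref_loss d0 \<pi>0 K Rtrue R =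
     (\<integral>\<^sup>+ x. (\<integral>\<^sup>+ A. ennreal (\<Sum>k<K. softmax_prob K (\<lambda>i. Rtrue x (A i)) k
                                     * ce_loss K (\<lambda>i. R x (A i)) k)
              \<partial>(PiM {..<K} (\<lambda>_. \<pi>0 x))) \<partial>d0)"

(* G_p(R) = E_{X~d0}[R_p(X, a_p(X)) - R_p(X, a_R(X))], with a_R = tb R;
   the integrand is nonnegative, so the expectation is taken in [0, \<infinity>] *)
definition subopt_gap ::
  "'x measure \<Rightarrow> (('x \<Rightarrow> 'a \<Rightarrow> real) \<Rightarrow> 'x \<Rightarrow> 'a) \<Rightarrow>
   ('x \<Rightarrow> 'a \<Rightarrow> real) \<Rightarrow> ('x \<Rightarrow> 'a \<Rightarrow> real) \<Rightarrow> ennreal" where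
  "subopt_gap d0 tb Rtrue R =
     (\<integral>\<^sup>+ x. ennreal (Rtrue x (tb Rtrue x) - Rtrue x (tb R x)) \<partial>d0)"

end

(*
  For a fixed context, the excess loss L_p(R_q) - L_p(R_p) is an expected KL divergence between
  softmax distributions (Gibbs' inequality), so it is nonnegative. It is strictly positive when
  the greedy actions of R_p and R_q differ on a set of positive d0-measure: there, by continuity
  on the support, R_q - R_p takes different values near the two greedy actions, and with positive
  probability the sampled action tuple hits both neighbourhoods. Hence G_p(R_q) >= eps0 forces a
  positive excess loss.

  Both sides are stable under perturbations of (R_p, R_q) that are small in sup-norm on the
  support: the loss changes by a factor close to 1 plus a small additive term, and thanks to the
  margin Delta the greedy actions do not change at all, so the gap moves by at most 2r. Every pair
  (p, q) thus has a neighbourhood on which either the gap stays below eps0 or the excess loss stays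
  above a positive constant; compactness of F_P x F_P yields finitely many such neighbourhoods,
  and gamma is the least of their constants.
*)

theory Submission
  imports Defs
begin

section \<open>Softmax cross-entropy\<close>

definition expected_ce :: "nat \<Rightarrow> (nat \<Rightarrow> real) \<Rightarrow> (nat \<Rightarrow> real) \<Rightarrow> real" where
  "expected_ce K v w = (\<Sum>k<K. softmax_prob K v k * ce_loss K w k)"

lemma sum_exp_pos: "0 < (K::nat) \<Longrightarrow> 0 < (\<Sum>l<K. exp (v l :: real))"
  by (intro sum_pos) auto

lemma softmax_prob_pos: "0 < K \<Longrightarrow> 0 < softmax_prob K v k"
  unfolding softmax_prob_def using sum_exp_pos[of K v] by simp

lemma sum_softmax_prob: "0 < K \<Longrightarrow> (\<Sum>k<K. softmax_prob K v k) = 1"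
  unfolding softmax_prob_def using sum_exp_pos[of K v] by (simp add: sum_divide_distrib[symmetric])

lemma ce_loss_nonneg:
  assumes "k < K"
  shows "0 \<le> ce_loss K w k"
proof -
  have "exp (w k) \<le> (\<Sum>l<K. exp (w l))"
    using assms by (intro member_le_sum) auto
  then show ?thesis
    unfolding ce_loss_def using assms by (simp add: ln_ge_iff sum_exp_pos)
qed

lemma expected_ce_nonneg: "0 \<le> expected_ce K v w"
  unfolding expected_ce_def
  by (intro sum_nonneg mult_nonneg_nonneg ce_loss_nonneg less_imp_le[OF softmax_prob_pos]) auto

lemma expected_ce_excess:
  assumes "0 < K"
  shows "expected_ce K v w - expected_ce K v v
           = ln (\<Sum>k<K. softmax_prob K v k * exp (w k - v k)) - (\<Sum>k<K. softmax_prob K v k * (w k - v k))"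
proof -
  define Zv where "Zv = (\<Sum>l<K. exp (v l))"
  define Zw where "Zw = (\<Sum>l<K. exp (w l))"
  have Z: "0 < Zv" "0 < Zw" unfolding Zv_def Zw_def using sum_exp_pos assms by auto
  have "(\<Sum>k<K. softmax_prob K v k * exp (w k - v k)) = Zw / Zv"
    unfolding softmax_prob_def Zw_def Zv_def[symmetric]
    by (simp add: exp_diff sum_divide_distrib[symmetric])
  moreover have "expected_ce K v w - expected_ce K v v
      = (\<Sum>k<K. softmax_prob K v k * ((ln Zw - ln Zv) - (w k - v k)))"
    unfolding expected_ce_def ce_loss_def Zw_def Zv_def
    by (simp add: sum_subtractf[symmetric] algebra_simps)
  moreover have "\<dots> = (ln Zw - ln Zv) - (\<Sum>k<K. softmax_prob K v k * (w k - v k))"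
    using sum_softmax_prob[OF assms, of v]
    by (simp add: right_diff_distrib sum_subtractf sum_distrib_right[symmetric])
  ultimately show ?thesis using Z by (simp add: ln_div)
qed

lemma exp_tangent_le: "exp m * (1 + (t - m)) \<le> exp (t :: real)"
  using exp_ge_add_one_self[of "t - m"] by (simp add: exp_diff field_simps)

lemma exp_tangent_less:
  assumes "t \<noteq> m"
  shows "exp m * (1 + (t - m)) < exp (t :: real)"
proof -
  have "1 + (t - m) < exp (t - m)"
    using ln_le_minus_one[of "exp (t - m)"] ln_eq_minus_one[of "exp (t - m)"] assms by force
  then show ?thesis by (simp add: exp_diff field_simps)
qed

lemma exp_weighted_mean:
  fixes s d :: "nat \<Rightarrow> real"
  assumes pos: "\<And>k. k < K \<Longrightarrow> 0 < s k" and sum1: "(\<Sum>k<K. s k) = 1"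
  shows exp_weighted_mean_le: "exp (\<Sum>k<K. s k * d k) \<le> (\<Sum>k<K. s k * exp (d k))"
    and exp_weighted_mean_less:
      "\<lbrakk>i < K; j < K; d i \<noteq> d j\<rbrakk> \<Longrightarrow> exp (\<Sum>k<K. s k * d k) < (\<Sum>k<K. s k * exp (d k))"
proof -
  define m where "m = (\<Sum>k<K. s k * d k)"
  have tangent_sum: "(\<Sum>k<K. s k * (exp m * (1 + (d k - m)))) = exp m"
  proof -
    have "(\<Sum>k<K. s k * (exp m * (1 + (d k - m))))
        = exp m * ((\<Sum>k<K. s k) + (\<Sum>k<K. s k * d k) - m * (\<Sum>k<K. s k))"
      by (simp add: algebra_simps sum.distrib sum_subtractf sum_distrib_left sum_distrib_right)
    then show ?thesis using sum1 m_def by simp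
  qed
  have le: "s k * (exp m * (1 + (d k - m))) \<le> s k * exp (d k)" if "k < K" for k
    using pos[OF that] exp_tangent_le by (intro mult_left_mono) auto
  have "(\<Sum>k<K. s k * (exp m * (1 + (d k - m)))) \<le> (\<Sum>k<K. s k * exp (d k))"
    using le by (intro sum_mono) auto
  then show "exp (\<Sum>k<K. s k * d k) \<le> (\<Sum>k<K. s k * exp (d k))"
    using tangent_sum m_def by simp
  assume "i < K" "j < K" "d i \<noteq> d j"
  then obtain l where l: "l < K" "d l \<noteq> m" by metis
  then have "s l * (exp m * (1 + (d l - m))) < s l * exp (d l)"
    using pos[OF l(1)] exp_tangent_less by simp
  then have "(\<Sum>k<K. s k * (exp m * (1 + (d k - m)))) < (\<Sum>k<K. s k * exp (d k))"
    using le l(1) by (intro sum_strict_mono_ex1) auto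
  then show "exp (\<Sum>k<K. s k * d k) < (\<Sum>k<K. s k * exp (d k))" using tangent_sum m_def by simp
qed

lemma expected_ce_self_le:
  assumes "0 < K"
  shows "expected_ce K v v \<le> expected_ce K v w"
proof -
  let ?s = "softmax_prob K v" and ?d = "\<lambda>k. w k - v k"
  have "exp (\<Sum>k<K. ?s k * ?d k) \<le> (\<Sum>k<K. ?s k * exp (?d k))"
    using softmax_prob_pos sum_softmax_prob assms by (intro exp_weighted_mean_le)
  then have "(\<Sum>k<K. ?s k * ?d k) \<le> ln (\<Sum>k<K. ?s k * exp (?d k))"
    by (metis exp_gt_zero ln_ge_iff order_less_le_trans)
  then show ?thesis using expected_ce_excess[OF assms, of v w] by simp
qed

lemma expected_ce_self_less:
  assumes "0 < K" "i < K" "j < K" "w i - v i \<noteq> w j - v j"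
  shows "expected_ce K v v < expected_ce K v w"
proof -
  let ?s = "softmax_prob K v" and ?d = "\<lambda>k. w k - v k"
  have "exp (\<Sum>k<K. ?s k * ?d k) < (\<Sum>k<K. ?s k * exp (?d k))"
    using softmax_prob_pos sum_softmax_prob assms by (intro exp_weighted_mean_less) auto
  then have "(\<Sum>k<K. ?s k * ?d k) < ln (\<Sum>k<K. ?s k * exp (?d k))"
    by (metis exp_gt_zero exp_less_cancel_iff exp_ln order_less_trans)
  then show ?thesis using expected_ce_excess[OF assms(1), of v w] by simp
qed

lemma expected_ce_self_le_ln:
  assumes "0 < K"
  shows "expected_ce K v v \<le> ln K"
proof -
  have "expected_ce K v (\<lambda>_. 0) = ln K"
    unfolding expected_ce_def ce_loss_def using sum_softmax_prob[OF assms, of v]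
    by (simp add: sum_distrib_right[symmetric])
  then show ?thesis using expected_ce_self_le[OF assms, of v "\<lambda>_. 0"] by simp
qed

lemma sum_exp_le_exp_mult:
  fixes v v' :: "nat \<Rightarrow> real"
  assumes "\<And>k. k < K \<Longrightarrow> \<bar>v' k - v k\<bar> \<le> r"
  shows "(\<Sum>l<K. exp (v' l)) \<le> exp r * (\<Sum>l<K. exp (v l))"
proof -
  have "exp (v' l) \<le> exp r * exp (v l)" if "l < K" for l
    using assms[OF that] by (simp add: exp_add[symmetric])
  then have "(\<Sum>l<K. exp (v' l)) \<le> (\<Sum>l<K. exp r * exp (v l))"
    by (intro sum_mono) auto
  then show ?thesis by (simp add: sum_distrib_left)
qed

lemma softmax_prob_ge:
  fixes v v' :: "nat \<Rightarrow> real"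
  assumes K: "0 < K" and k: "k < K" and close: "\<And>k. k < K \<Longrightarrow> \<bar>v' k - v k\<bar> \<le> r"
  shows "exp (-2*r) * softmax_prob K v k \<le> softmax_prob K v' k"
proof -
  have "exp (-2*r) * softmax_prob K v k = (exp (-r) * exp (v k)) / (exp r * (\<Sum>l<K. exp (v l)))"
    unfolding softmax_prob_def by (simp add: exp_add[symmetric] exp_minus field_simps)
  also have "\<dots> \<le> exp (v' k) / (\<Sum>l<K. exp (v' l))"
  proof (rule frac_le)
    show "exp (-r) * exp (v k) \<le> exp (v' k)"
      using close[OF k] by (simp add: exp_add[symmetric])
    show "(\<Sum>l<K. exp (v' l)) \<le> exp r * (\<Sum>l<K. exp (v l))"
      using close by (rule sum_exp_le_exp_mult)
  qed (use sum_exp_pos K in auto)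
  finally show ?thesis unfolding softmax_prob_def .
qed

lemma softmax_prob_le:
  fixes v v' :: "nat \<Rightarrow> real"
  assumes K: "0 < K" and k: "k < K" and close: "\<And>k. k < K \<Longrightarrow> \<bar>v' k - v k\<bar> \<le> r"
  shows "softmax_prob K v' k \<le> exp (2*r) * softmax_prob K v k"
proof -
  have "exp (-2*r) * softmax_prob K v' k \<le> softmax_prob K v k"
    using close by (intro softmax_prob_ge[OF K k]) (simp add: abs_minus_commute)
  then show ?thesis by (simp add: exp_minus field_simps)
qed

lemma ln_sum_exp_le:
  fixes v v' :: "nat \<Rightarrow> real"
  assumes K: "0 < K" and close: "\<And>k. k < K \<Longrightarrow> \<bar>v' k - v k\<bar> \<le> r"
  shows "ln (\<Sum>l<K. exp (v' l)) \<le> r + ln (\<Sum>l<K. exp (v l))"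
proof -
  have "ln (\<Sum>l<K. exp (v' l)) \<le> ln (exp r * (\<Sum>l<K. exp (v l)))"
    using sum_exp_le_exp_mult[OF close] sum_exp_pos[OF K] by simp
  also have "\<dots> = r + ln (\<Sum>l<K. exp (v l))" using sum_exp_pos[OF K, of v] by (simp add: ln_mult)
  finally show ?thesis .
qed

lemma ce_loss_perturb:
  fixes w w' :: "nat \<Rightarrow> real"
  assumes K: "0 < K" and k: "k < K" and close: "\<And>k. k < K \<Longrightarrow> \<bar>w' k - w k\<bar> \<le> r"
  shows "\<bar>ce_loss K w' k - ce_loss K w k\<bar> \<le> 2 * r"
proof -
  have "ln (\<Sum>l<K. exp (w l)) \<le> r + ln (\<Sum>l<K. exp (w' l))"
    using close by (intro ln_sum_exp_le[OF K]) (simp add: abs_minus_commute)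
  then show ?thesis
    using ln_sum_exp_le[OF K, of w' w r] close close[OF k] unfolding ce_loss_def by (auto simp: abs_le_iff)
qed

text \<open>Moving both score vectors by at most \<open>r\<close> changes the softmax weights by a factor
  in \<open>[exp (-2*r), exp (2*r)]\<close> and each loss term by at most \<open>2*r\<close>.\<close>

lemma expected_ce_perturb:
  assumes K: "0 < K" and r: "0 \<le> r"
    and close_v: "\<And>k. k < K \<Longrightarrow> \<bar>v' k - v k\<bar> \<le> r"
    and close_w: "\<And>k. k < K \<Longrightarrow> \<bar>w' k - w k\<bar> \<le> r"
  shows "exp (-2*r) * expected_ce K v w \<le> expected_ce K v' w' + 2*r"
    and "expected_ce K v' w' \<le> exp (2*r) * expected_ce K v w + 2*r"
proof -
  let ?s = "softmax_prob K v" and ?s' = "softmax_prob K v'"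
  have ce: "ce_loss K w k \<le> ce_loss K w' k + 2*r" "ce_loss K w' k \<le> ce_loss K w k + 2*r"
    if "k < K" for k
    using ce_loss_perturb[OF K that, of w' w r] close_w by (auto simp: abs_le_iff)
  have s': "0 \<le> ?s' k" for k using softmax_prob_pos[OF K, of v' k] by simp
  have shift: "(\<Sum>k<K. ?s' k * (c k + 2*r)) = (\<Sum>k<K. ?s' k * c k) + 2*r" for c
    using sum_softmax_prob[OF K, of v']
    by (simp add: distrib_left sum.distrib sum_distrib_right[symmetric])
  have "exp (-2*r) * expected_ce K v w = (\<Sum>k<K. (exp (-2*r) * ?s k) * ce_loss K w k)"
    unfolding expected_ce_def by (simp add: sum_distrib_left mult.assoc)
  also have "\<dots> \<le> (\<Sum>k<K. ?s' k * ce_loss K w k)"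
    by (intro sum_mono mult_right_mono softmax_prob_ge[OF K _ close_v] ce_loss_nonneg) auto
  also have "\<dots> \<le> (\<Sum>k<K. ?s' k * (ce_loss K w' k + 2*r))"
    using ce s' by (intro sum_mono mult_left_mono) auto
  finally show "exp (-2*r) * expected_ce K v w \<le> expected_ce K v' w' + 2*r"
    unfolding shift expected_ce_def .
  have "expected_ce K v' w' \<le> (\<Sum>k<K. ?s' k * (ce_loss K w k + 2*r))"
    unfolding expected_ce_def using ce s' by (intro sum_mono mult_left_mono) auto
  also have "\<dots> = (\<Sum>k<K. ?s' k * ce_loss K w k) + 2*r" by (rule shift)
  also have "(\<Sum>k<K. ?s' k * ce_loss K w k) \<le> (\<Sum>k<K. (exp (2*r) * ?s k) * ce_loss K w k)"
    by (intro sum_mono mult_right_mono softmax_prob_le[OF K _ close_v] ce_loss_nonneg) auto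
  also have "\<dots> = exp (2*r) * expected_ce K v w"
    unfolding expected_ce_def by (simp add: sum_distrib_left mult.assoc)
  finally show "expected_ce K v' w' \<le> exp (2*r) * expected_ce K v w + 2*r" by simp
qed

section \<open>Supports and finite powers of kernels\<close>

lemma AE_in_supp:
  fixes M :: "'a::second_countable_topology measure"
  assumes "sets M = sets borel"
  shows "AE a in M. a \<in> supp M"
proof -
  obtain B :: "'a set set" where B: "countable B" "topological_basis B"
    using ex_countable_basis by auto
  let ?N = "\<Union>b\<in>{b\<in>B. emeasure M b = 0}. b"
  have "?N \<in> null_sets M"
    using B assms topological_basis_open[OF B(2)] by (intro null_sets_UN') (auto simp: null_sets_def)
  moreover have "- supp M \<subseteq> ?N"
  proof
    fix a assume "a \<in> - supp M"
    then obtain U where U: "open U" "a \<in> U" "emeasure M U = 0" unfolding supp_def by auto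
    then obtain b where b: "b \<in> B" "a \<in> b" "b \<subseteq> U" using topological_basisE[OF B(2)] by metis
    have "emeasure M b \<le> emeasure M U"
      using b U assms topological_basis_open[OF B(2)] by (intro emeasure_mono) auto
    then show "a \<in> ?N" using b U(3) by auto
  qed
  ultimately show ?thesis by (auto intro: AE_I')
qed

lemma supp_nonempty:
  fixes M :: "'a::second_countable_topology measure"
  assumes "prob_space M" "sets M = sets borel"
  shows "supp M \<noteq> {}"
  using AE_in_supp[OF assms(2)] prob_space.AE_False[OF assms(1)] by auto

lemma AE_PiM_all_components:
  assumes "prob_space M" "countable I" "AE a in M. P a"
  shows "AE A in PiM I (\<lambda>_. M). \<forall>i\<in>I. P (A i)"
  using assms by (intro AE_ball_countable' AE_PiM_component) auto

lemma measurable_PiM_kernel: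
  assumes \<kappa>: "\<kappa> \<in> N \<rightarrow>\<^sub>M prob_algebra M" and I: "finite I"
  shows "(\<lambda>x. PiM I (\<lambda>_. \<kappa> x)) \<in> N \<rightarrow>\<^sub>M prob_algebra (PiM I (\<lambda>_. M))"
proof -
  have \<kappa>x: "sets (\<kappa> x) = sets M" "prob_space (\<kappa> x)" if "x \<in> space N" for x
    using measurable_space[OF \<kappa> that] by (auto simp: space_prob_algebra)
  show ?thesis
  proof (rule measurable_prob_algebra_generated[OF sets_PiM Int_stable_prod_algebra prod_algebra_sets_into_space])
    fix x assume x: "x \<in> space N"
    show "prob_space (PiM I (\<lambda>_. \<kappa> x))" using \<kappa>x[OF x] by (intro prob_space_PiM) auto
    show "sets (PiM I (\<lambda>_. \<kappa> x)) = sets (PiM I (\<lambda>_. M))"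
      using \<kappa>x[OF x] by (intro sets_PiM_cong) auto
  next
    fix A assume "A \<in> prod_algebra I (\<lambda>_. M)"
    then obtain E where E: "A = Pi\<^sub>E I E" "E \<in> (\<Pi> i\<in>I. sets M)"
      by (rule prod_algebraE_all)
    have "emeasure (PiM I (\<lambda>_. \<kappa> x)) A = (\<Prod>i\<in>I. emeasure (\<kappa> x) (E i))" if x: "x \<in> space N" for x
    proof -
      interpret prob_space "\<kappa> x" using \<kappa>x[OF x] by auto
      interpret product_sigma_finite "\<lambda>_. \<kappa> x" by standard
      show ?thesis unfolding E(1) using E(2) \<kappa>x[OF x] I by (intro emeasure_PiM) auto
    qed
    moreover have "(\<lambda>x. \<Prod>i\<in>I. emeasure (\<kappa> x) (E i)) \<in> borel_measurable N"
      using E(2) measurable_prob_algebraD[OF \<kappa>]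
      by (intro borel_measurable_prod_ennreal measurable_emeasure_kernel) auto
    ultimately show "(\<lambda>x. emeasure (PiM I (\<lambda>_. \<kappa> x)) A) \<in> borel_measurable N"
      by (simp cong: measurable_cong)
  qed
qed

section \<open>The sup-distance on supports and ball compactness\<close>

lemma supp_dist_lessD:
  assumes "supp_dist d0 \<pi>0 f g < ereal r" "x \<in> space d0" "a \<in> supp (\<pi>0 x)"
  shows "\<bar>f x a - g x a\<bar> < r"
proof -
  have "ereal \<bar>f x a - g x a\<bar> \<le> supp_dist d0 \<pi>0 f g"
    unfolding supp_dist_def using assms(2,3) by (intro SUP_upper2[of x] SUP_upper) auto
  then have "ereal \<bar>f x a - g x a\<bar> < ereal r" using assms(1) by (rule order.strict_trans1)
  then show ?thesis by simp
qed

lemma supp_dist_nonneg: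
  assumes "x \<in> space d0" "a \<in> supp (\<pi>0 x)"
  shows "0 \<le> supp_dist d0 \<pi>0 f g"
proof -
  have "ereal \<bar>f x a - g x a\<bar> \<le> supp_dist d0 \<pi>0 f g"
    unfolding supp_dist_def using assms by (intro SUP_upper2[of x] SUP_upper) auto
  then show ?thesis by (rule order_trans[rotated]) simp
qed

lemma supp_dist_self: "supp_dist d0 \<pi>0 f f \<le> 0"
  unfolding supp_dist_def by (intro SUP_least) (simp add: zero_ereal_def)

lemma supp_dist_triangle: "supp_dist d0 \<pi>0 f h \<le> supp_dist d0 \<pi>0 f g + supp_dist d0 \<pi>0 g h"
  unfolding supp_dist_def
proof (intro SUP_least)
  fix x a assume x: "x \<in> space d0" and a: "a \<in> supp (\<pi>0 x)"
  have "ereal \<bar>f x a - h x a\<bar> \<le> ereal \<bar>f x a - g x a\<bar> + ereal \<bar>g x a - h x a\<bar>"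
    by simp
  also have "\<dots> \<le> (SUP x\<in>space d0. SUP a\<in>supp (\<pi>0 x). ereal \<bar>f x a - g x a\<bar>)
                  + (SUP x\<in>space d0. SUP a\<in>supp (\<pi>0 x). ereal \<bar>g x a - h x a\<bar>)"
    by (intro add_mono SUP_upper2[OF x] SUP_upper[OF a] order_refl)
  finally show "ereal \<bar>f x a - h x a\<bar> \<le> \<dots>" .
qed

lemma supp_open_ball:
  assumes "x \<in> space d0" "a \<in> supp (\<pi>0 x)"
  shows "supp_open d0 \<pi>0 {h. supp_dist d0 \<pi>0 f h < ereal r}"
  unfolding supp_open_def
proof
  fix h assume "h \<in> {h. supp_dist d0 \<pi>0 f h < ereal r}"
  then obtain s where s: "supp_dist d0 \<pi>0 f h = ereal s" "s < r"
    using supp_dist_nonneg[OF assms(1), of a \<pi>0, OF assms(2), of f h] by (cases "supp_dist d0 \<pi>0 f h") auto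
  show "\<exists>e>0. \<forall>g. supp_dist d0 \<pi>0 h g < ereal e \<longrightarrow> g \<in> {h. supp_dist d0 \<pi>0 f h < ereal r}"
  proof (intro exI[of _ "r - s"] conjI allI impI)
    fix g assume hg: "supp_dist d0 \<pi>0 h g < ereal (r - s)"
    have "supp_dist d0 \<pi>0 f g \<le> ereal s + supp_dist d0 \<pi>0 h g"
      using supp_dist_triangle[of d0 \<pi>0 f g h] s(1) by simp
    also have "\<dots> < ereal r"
      using hg supp_dist_nonneg[OF assms(1), of a \<pi>0, OF assms(2), of h g] by (cases "supp_dist d0 \<pi>0 h g") auto
    finally show "g \<in> {h. supp_dist d0 \<pi>0 f h < ereal r}" by simp
  qed (use s in simp)
qed

text \<open>Finite subcovers of covers by balls with centre-dependent radii; unlike covers by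
  arbitrary open sets, this passes to \<open>F \<times> F\<close> with the maximum distance.\<close>

definition ball_compact :: "('b \<Rightarrow> 'b \<Rightarrow> ereal) \<Rightarrow> 'b set \<Rightarrow> bool" where
  "ball_compact d F \<longleftrightarrow>
     (\<forall>\<rho>. (\<forall>f\<in>F. 0 < \<rho> f) \<longrightarrow> (\<exists>G\<subseteq>F. finite G \<and> (\<forall>h\<in>F. \<exists>g\<in>G. d g h < ereal (\<rho> g))))"

lemma ball_compactD:
  assumes "ball_compact d F" "\<And>f. f \<in> F \<Longrightarrow> 0 < \<rho> f"
  shows "\<exists>G\<subseteq>F. finite G \<and> (\<forall>h\<in>F. \<exists>g\<in>G. d g h < ereal (\<rho> g))"
  using assms unfolding ball_compact_def by simp

lemma ball_compact_supp_dist: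
  assumes "supp_compact d0 \<pi>0 F" "x \<in> space d0" "a \<in> supp (\<pi>0 x)"
  shows "ball_compact (supp_dist d0 \<pi>0) F"
  unfolding ball_compact_def
proof (intro allI impI)
  fix \<rho> :: "_ \<Rightarrow> real" assume \<rho>: "\<forall>f\<in>F. 0 < \<rho> f"
  let ?ball = "\<lambda>g. {h. supp_dist d0 \<pi>0 g h < ereal (\<rho> g)}"
  have "F \<subseteq> \<Union>(?ball ` F)"
  proof
    fix f assume f: "f \<in> F"
    have "supp_dist d0 \<pi>0 f f < ereal (\<rho> f)"
      using order.strict_trans1[OF supp_dist_self[of d0 \<pi>0 f]] \<rho> f by simp
    then show "f \<in> \<Union>(?ball ` F)" using f by blast
  qed
  moreover have "\<forall>U\<in>?ball ` F. supp_open d0 \<pi>0 U"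
    using supp_open_ball[OF assms(2), of a \<pi>0, OF assms(3)] by blast
  ultimately have "\<exists>V\<subseteq>?ball ` F. finite V \<and> F \<subseteq> \<Union>V"
    using assms(1) unfolding supp_compact_def by simp
  then obtain V where V: "V \<subseteq> ?ball ` F" "finite V" "F \<subseteq> \<Union>V" by blast
  obtain G where G: "G \<subseteq> F" "finite G" "V = ?ball ` G"
    using finite_subset_image[OF V(2,1)] by blast
  have "\<exists>g\<in>G. supp_dist d0 \<pi>0 g h < ereal (\<rho> g)" if "h \<in> F" for h
    using that V(3) unfolding G(3) by blast
  with G(1,2) show "\<exists>G\<subseteq>F. finite G \<and> (\<forall>h\<in>F. \<exists>g\<in>G. supp_dist d0 \<pi>0 g h < ereal (\<rho> g))"
    by blast
qed

lemma ball_compact_Times: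
  assumes "ball_compact d F"
  shows "ball_compact (\<lambda>p q. max (d (fst p) (fst q)) (d (snd p) (snd q))) (F \<times> F)"
  unfolding ball_compact_def
proof (intro allI impI)
  fix \<rho> :: "_ \<Rightarrow> real" assume \<rho>: "\<forall>p\<in>F \<times> F. 0 < \<rho> p"
  have "\<forall>f\<in>F. \<exists>G\<subseteq>F. finite G \<and> (\<forall>h\<in>F. \<exists>g\<in>G. d g h < ereal (\<rho> (f, g)))"
  proof
    fix f assume "f \<in> F"
    then show "\<exists>G\<subseteq>F. finite G \<and> (\<forall>h\<in>F. \<exists>g\<in>G. d g h < ereal (\<rho> (f, g)))"
      using \<rho> by (intro ball_compactD[OF assms, of "\<lambda>g. \<rho> (f, g)"]) simp
  qed
  then have "\<exists>G. \<forall>f\<in>F. G f \<subseteq> F \<and> finite (G f) \<and> (\<forall>h\<in>F. \<exists>g\<in>G f. d g h < ereal (\<rho> (f, g)))"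
    by (rule bchoice)
  then obtain G where G: "\<And>f. f \<in> F \<Longrightarrow> G f \<subseteq> F" "\<And>f. f \<in> F \<Longrightarrow> finite (G f)"
    and cover_G: "\<And>f h. f \<in> F \<Longrightarrow> h \<in> F \<Longrightarrow> \<exists>g\<in>G f. d g h < ereal (\<rho> (f, g))"
    by blast
  \<comment> \<open>tube lemma: near \<open>f\<close>, the radius \<open>\<sigma> f\<close> works for all the finitely many centres in \<open>G f\<close>\<close>
  define \<sigma> where "\<sigma> f = Min (insert 1 ((\<lambda>g. \<rho> (f, g)) ` G f))" for f
  have \<sigma>_pos: "0 < \<sigma> f" if f: "f \<in> F" for f
  proof -
    have "0 < \<rho> (f, g)" if "g \<in> G f" for g
      using \<rho> f G(1)[OF f] that by blast
    then show ?thesis using G(2)[OF f] by (simp add: \<sigma>_def)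
  qed
  have \<sigma>_le: "\<sigma> f \<le> \<rho> (f, g)" if "f \<in> F" "g \<in> G f" for f g
    using G(2)[OF that(1)] that(2) by (simp add: \<sigma>_def)
  obtain H where H: "H \<subseteq> F" "finite H" and cover_H: "\<And>h. h \<in> F \<Longrightarrow> \<exists>f\<in>H. d f h < ereal (\<sigma> f)"
    using ball_compactD[OF assms, of \<sigma>] \<sigma>_pos by blast
  show "\<exists>P\<subseteq>F \<times> F. finite P \<and>
          (\<forall>q\<in>F \<times> F. \<exists>p\<in>P. max (d (fst p) (fst q)) (d (snd p) (snd q)) < ereal (\<rho> p))"
  proof (intro exI[of _ "SIGMA f:H. G f"] conjI ballI)
    show "(SIGMA f:H. G f) \<subseteq> F \<times> F"
      using H(1) G(1) by blast
    show "finite (SIGMA f:H. G f)"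
      using H G(2) by (intro finite_SigmaI) auto
    fix q assume q: "q \<in> F \<times> F"
    then obtain f where f: "f \<in> H" "d f (fst q) < ereal (\<sigma> f)"
      using cover_H[of "fst q"] by auto
    then have "f \<in> F" using H(1) by blast
    then obtain g where g: "g \<in> G f" "d g (snd q) < ereal (\<rho> (f, g))"
      using cover_G[of f "snd q"] q by auto
    have "d f (fst q) < ereal (\<rho> (f, g))"
      using f(2) \<sigma>_le[OF \<open>f \<in> F\<close> g(1)] by (simp add: order.strict_trans2)
    then have "max (d f (fst q)) (d g (snd q)) < ereal (\<rho> (f, g))"
      using g(2) by simp
    then show "\<exists>p\<in>SIGMA f:H. G f. max (d (fst p) (fst q)) (d (snd p) (snd q)) < ereal (\<rho> p)"
      using f(1) g(1) by force
  qed
qed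

lemma ball_compact_uniform:
  fixes P :: "'b \<Rightarrow> real \<Rightarrow> bool"
  assumes "ball_compact d F"
    and local: "\<And>f. f \<in> F \<Longrightarrow> \<exists>r>0. \<exists>\<gamma>>0. \<forall>f'\<in>F. d f f' < ereal r \<longrightarrow> P f' \<gamma>"
    and mono: "\<And>f \<gamma> \<gamma>'. P f \<gamma> \<Longrightarrow> \<gamma>' \<le> \<gamma> \<Longrightarrow> P f \<gamma>'"
  shows "\<exists>\<gamma>>0. \<forall>f\<in>F. P f \<gamma>"
proof -
  have "\<forall>f\<in>F. \<exists>r. 0 < r \<and> (\<exists>\<gamma>>0. \<forall>f'\<in>F. d f f' < ereal r \<longrightarrow> P f' \<gamma>)"
    using local by blast
  then have "\<exists>r. \<forall>f\<in>F. 0 < r f \<and> (\<exists>\<gamma>>0. \<forall>f'\<in>F. d f f' < ereal (r f) \<longrightarrow> P f' \<gamma>)"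
    by (rule bchoice)
  then obtain r where "\<forall>f\<in>F. 0 < r f \<and> (\<exists>\<gamma>>0. \<forall>f'\<in>F. d f f' < ereal (r f) \<longrightarrow> P f' \<gamma>)"
    by blast
  then have "\<exists>\<gamma>. \<forall>f\<in>F. 0 < r f \<and> 0 < \<gamma> f \<and> (\<forall>f'\<in>F. d f f' < ereal (r f) \<longrightarrow> P f' (\<gamma> f))"
    by (intro bchoice) blast
  then obtain \<gamma> where r\<gamma>: "\<And>f. f \<in> F \<Longrightarrow> 0 < r f \<and> 0 < \<gamma> f"
    and near: "\<And>f f'. f \<in> F \<Longrightarrow> f' \<in> F \<Longrightarrow> d f f' < ereal (r f) \<Longrightarrow> P f' (\<gamma> f)"
    by blast
  obtain G where G: "G \<subseteq> F" "finite G" and cover: "\<And>h. h \<in> F \<Longrightarrow> \<exists>g\<in>G. d g h < ereal (r g)"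
    using ball_compactD[OF assms(1), of r] r\<gamma> by blast
  define \<gamma>0 where "\<gamma>0 = Min (insert 1 (\<gamma> ` G))"
  have "0 < \<gamma>0" using G r\<gamma> by (auto simp: \<gamma>0_def)
  moreover have "P f \<gamma>0" if f: "f \<in> F" for f
  proof -
    obtain g where "g \<in> G" "d g f < ereal (r g)" using cover[OF f] by blast
    then show ?thesis using near[of g f] mono G f by (auto simp: \<gamma>0_def)
  qed
  ultimately show ?thesis by blast
qed

section \<open>The preference loss in a single context\<close>

definition cond_pref_loss :: "'a measure \<Rightarrow> nat \<Rightarrow> ('a \<Rightarrow> real) \<Rightarrow> ('a \<Rightarrow> real) \<Rightarrow> ennreal" where
  "cond_pref_loss M K u w =
     (\<integral>\<^sup>+ A. ennreal (expected_ce K (\<lambda>i. u (A i)) (\<lambda>i. w (A i))) \<partial>PiM {..<K} (\<lambda>_. M))"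

lemma pref_loss_eq_cond_pref_loss:
  "pref_loss d0 \<pi>0 K R' R = (\<integral>\<^sup>+ x. cond_pref_loss (\<pi>0 x) K (R' x) (R x) \<partial>d0)"
  unfolding pref_loss_def cond_pref_loss_def expected_ce_def ..

lemma measurable_expected_ce_PiM [measurable]:
  assumes [measurable]: "u \<in> borel_measurable M" "w \<in> borel_measurable M"
  shows "(\<lambda>A. expected_ce K (\<lambda>i. u (A i)) (\<lambda>i. w (A i))) \<in> borel_measurable (PiM {..<K} (\<lambda>_. M))"
  unfolding expected_ce_def softmax_prob_def ce_loss_def by measurable

lemma cond_pref_loss_self_le_ln:
  assumes "prob_space M" "0 < K"
  shows "cond_pref_loss M K u u \<le> ennreal (ln K)"
proof -
  interpret prob_space "PiM {..<K} (\<lambda>_. M)" using assms(1) by (intro prob_space_PiM)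
  have "cond_pref_loss M K u u \<le> (\<integral>\<^sup>+ A. ennreal (ln K) \<partial>PiM {..<K} (\<lambda>_. M))"
    unfolding cond_pref_loss_def
    by (intro nn_integral_mono ennreal_leI expected_ce_self_le_ln assms(2))
  then show ?thesis by (simp add: emeasure_space_1)
qed

lemma cond_pref_loss_self_le: "0 < K \<Longrightarrow> cond_pref_loss M K u u \<le> cond_pref_loss M K u w"
  unfolding cond_pref_loss_def by (intro nn_integral_mono ennreal_leI expected_ce_self_le)

lemma cond_pref_loss_perturb:
  assumes M: "prob_space M" and K: "0 < K" and r: "0 \<le> r"
    and [measurable]: "u \<in> borel_measurable M" "w \<in> borel_measurable M"
      "u' \<in> borel_measurable M" "w' \<in> borel_measurable M"
    and close: "AE a in M. \<bar>u' a - u a\<bar> \<le> r \<and> \<bar>w' a - w a\<bar> \<le> r"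
  shows "ennreal (exp (-2*r)) * cond_pref_loss M K u w \<le> cond_pref_loss M K u' w' + ennreal (2*r)"
    and "cond_pref_loss M K u' w' \<le> ennreal (exp (2*r)) * cond_pref_loss M K u w + ennreal (2*r)"
proof -
  let ?M = "PiM {..<K} (\<lambda>_. M)"
  interpret prob_space ?M using M by (intro prob_space_PiM)
  let ?S = "\<lambda>A. expected_ce K (\<lambda>i. u (A i)) (\<lambda>i. w (A i))"
  let ?S' = "\<lambda>A. expected_ce K (\<lambda>i. u' (A i)) (\<lambda>i. w' (A i))"
  have "AE A in ?M. \<forall>i\<in>{..<K}. \<bar>u' (A i) - u (A i)\<bar> \<le> r \<and> \<bar>w' (A i) - w (A i)\<bar> \<le> r"
    using close M by (intro AE_PiM_all_components) auto
  then have "AE A in ?M. exp (-2*r) * ?S A \<le> ?S' A + 2*r \<and> ?S' A \<le> exp (2*r) * ?S A + 2*r"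
  proof eventually_elim
    case (elim A)
    then show ?case
      using expected_ce_perturb[OF K r, of "\<lambda>i. u' (A i)" "\<lambda>i. u (A i)" "\<lambda>i. w' (A i)" "\<lambda>i. w (A i)"]
      by auto
  qed
  then have AE_ge: "AE A in ?M. exp (-2*r) * ?S A \<le> ?S' A + 2*r"
    and AE_le: "AE A in ?M. ?S' A \<le> exp (2*r) * ?S A + 2*r"
    by (auto elim: eventually_mono)
  have S_nonneg: "0 \<le> ?S A" "0 \<le> ?S' A" for A by (simp_all add: expected_ce_nonneg)
  have "ennreal (exp (-2*r)) * cond_pref_loss M K u w = (\<integral>\<^sup>+ A. ennreal (exp (-2*r) * ?S A) \<partial>?M)"
    unfolding cond_pref_loss_def by (simp add: nn_integral_cmult[symmetric] ennreal_mult S_nonneg)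
  also have "\<dots> \<le> (\<integral>\<^sup>+ A. ennreal (?S' A + 2*r) \<partial>?M)"
    using AE_ge by (intro nn_integral_mono_AE) (auto elim!: eventually_mono intro: ennreal_leI)
  also have "\<dots> = cond_pref_loss M K u' w' + ennreal (2*r)"
    unfolding cond_pref_loss_def using r S_nonneg
    by (simp add: ennreal_plus nn_integral_add emeasure_space_1)
  finally show "ennreal (exp (-2*r)) * cond_pref_loss M K u w \<le> cond_pref_loss M K u' w' + ennreal (2*r)" .
  have "cond_pref_loss M K u' w' \<le> (\<integral>\<^sup>+ A. ennreal (exp (2*r) * ?S A + 2*r) \<partial>?M)"
    unfolding cond_pref_loss_def
    using AE_le by (intro nn_integral_mono_AE) (auto elim!: eventually_mono intro: ennreal_leI)
  also have "\<dots> = ennreal (exp (2*r)) * cond_pref_loss M K u w + ennreal (2*r)"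
    unfolding cond_pref_loss_def using r S_nonneg
    by (simp add: ennreal_plus ennreal_mult nn_integral_add nn_integral_cmult emeasure_space_1)
  finally show "cond_pref_loss M K u' w' \<le> ennreal (exp (2*r)) * cond_pref_loss M K u w + ennreal (2*r)" .
qed

lemma PiM_two_components_not_AE:
  fixes K :: nat
  assumes M: "prob_space M" and K: "2 \<le> K"
    and U: "U \<in> sets M" "0 < emeasure M U" and V: "V \<in> sets M" "0 < emeasure M V"
  shows "\<not> (AE A in PiM {..<K} (\<lambda>_. M). \<not> (A 0 \<in> U \<and> A 1 \<in> V))"
proof
  let ?M = "PiM {..<K} (\<lambda>_. M)"
  define E where "E i = (if i = 0 then U else V)" for i :: nat
  define B where "B = prod_emb {..<K} (\<lambda>_. M) {0, 1} (Pi\<^sub>E {0, 1} E)"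
  have "emeasure ?M B = (\<Prod>i\<in>{0, 1}. emeasure M (E i))"
    unfolding B_def using M K U V by (intro emeasure_PiM_emb) (auto simp: E_def)
  then have "0 < emeasure ?M B"
    using U V by (simp add: E_def ennreal_zero_less_mult_iff)
  moreover assume "AE A in ?M. \<not> (A 0 \<in> U \<and> A 1 \<in> V)"
  then have "AE A in ?M. A \<notin> B"
    by (rule eventually_mono) (auto simp: B_def prod_emb_iff E_def PiE_iff)
  then have "emeasure ?M {A \<in> space ?M. A \<in> B} = 0"
    by (rule emeasure_eq_0_AE)
  moreover have "B \<in> sets ?M"
    unfolding B_def using K U V by (intro sets_PiM_I) (auto simp: E_def)
  then have "{A \<in> space ?M. A \<in> B} = B"
    using sets.sets_into_space by blast
  ultimately show False by simp
qed

lemma cond_pref_loss_self_less: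
  fixes M :: "'a::{metric_space, second_countable_topology} measure"
  assumes M: "prob_space M" "sets M = sets borel" and K: "2 \<le> K"
    and [measurable]: "u \<in> borel_measurable M" "w \<in> borel_measurable M"
    and cont: "continuous_on (supp M) (\<lambda>c. w c - u c)"
    and a: "a \<in> supp M" and b: "b \<in> supp M" and ne: "w a - u a \<noteq> w b - u b"
  shows "cond_pref_loss M K u u < cond_pref_loss M K u w"
proof -
  let ?M = "PiM {..<K} (\<lambda>_. M)"
  let ?h = "\<lambda>c. w c - u c"
  let ?S = "\<lambda>v A. expected_ce K (\<lambda>i. u (A i)) (\<lambda>i. v (A i))"
  define \<delta> where "\<delta> = \<bar>?h a - ?h b\<bar> / 2"
  have "0 < \<delta>" using ne by (simp add: \<delta>_def)
  then obtain \<rho>a \<rho>b where "0 < \<rho>a" "0 < \<rho>b"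
    and near_a: "\<And>c. c \<in> supp M \<Longrightarrow> dist c a < \<rho>a \<Longrightarrow> dist (?h c) (?h a) < \<delta>"
    and near_b: "\<And>c. c \<in> supp M \<Longrightarrow> dist c b < \<rho>b \<Longrightarrow> dist (?h c) (?h b) < \<delta>"
    using cont a b unfolding continuous_on_iff by metis
  \<comment> \<open>with positive probability the first two actions separate \<open>?h\<close>, which makes Gibbs' inequality strict\<close>
  have separating: "\<not> (AE A in ?M. \<not> (A 0 \<in> ball a \<rho>a \<and> A 1 \<in> ball b \<rho>b))"
    using M K a b \<open>0 < \<rho>a\<close> \<open>0 < \<rho>b\<close>
    by (intro PiM_two_components_not_AE) (auto simp: supp_def)
  have strict: "AE A in ?M. A 0 \<in> ball a \<rho>a \<and> A 1 \<in> ball b \<rho>b \<longrightarrow> ?S u A < ?S w A"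
    using AE_PiM_all_components[OF M(1) countable_finite[OF finite_lessThan] AE_in_supp[OF M(2)]]
  proof eventually_elim
    case (elim A)
    show ?case
    proof
      assume "A 0 \<in> ball a \<rho>a \<and> A 1 \<in> ball b \<rho>b"
      then have "dist (A 0) a < \<rho>a" "dist (A 1) b < \<rho>b" by (simp_all add: dist_commute)
      moreover have "A 0 \<in> supp M" "A 1 \<in> supp M" using elim K by auto
      ultimately have "dist (?h (A 0)) (?h a) < \<delta>" "dist (?h (A 1)) (?h b) < \<delta>"
        using near_a near_b by blast+
      then have "?h (A 0) \<noteq> ?h (A 1)"
        unfolding \<delta>_def dist_real_def by (auto simp: abs_if split: if_split_asm)
      then show "?S u A < ?S w A"
        using K by (intro expected_ce_self_less[of K 0 1]) auto
    qed
  qed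
  have "\<not> (AE A in ?M. ennreal (?S w A) \<le> ennreal (?S u A))"
  proof
    assume "AE A in ?M. ennreal (?S w A) \<le> ennreal (?S u A)"
    with strict have "AE A in ?M. \<not> (A 0 \<in> ball a \<rho>a \<and> A 1 \<in> ball b \<rho>b)"
      by eventually_elim (auto simp: expected_ce_nonneg)
    with separating show False ..
  qed
  moreover have "cond_pref_loss M K u u \<noteq> \<infinity>"
    using cond_pref_loss_self_le_ln[OF M(1), of K u] K by (auto simp: top_unique)
  ultimately show ?thesis
    unfolding cond_pref_loss_def using K
    by (intro nn_integral_less) (auto intro!: AE_I2 ennreal_leI expected_ce_self_le)
qed

section \<open>Reward classes with a margin\<close>

lemma measurable_reward_comp:
  assumes "is_reward d0 f" "h \<in> d0 \<rightarrow>\<^sub>M borel"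
  shows "(\<lambda>x. f x (h x)) \<in> borel_measurable d0"
proof -
  have "(\<lambda>x. (x, h x)) \<in> d0 \<rightarrow>\<^sub>M d0 \<Otimes>\<^sub>M borel" using assms(2) by measurable
  from measurable_compose[OF this assms(1)[unfolded is_reward_def]] show ?thesis by simp
qed

lemma measurable_reward_section:
  assumes "is_reward d0 f" "x \<in> space d0"
  shows "f x \<in> borel_measurable borel"
  using measurable_Pair2[OF assms(1)[unfolded is_reward_def] assms(2)] by simp

lemma measurable_cond_pref_loss:
  assumes \<pi>0: "\<pi>0 \<in> d0 \<rightarrow>\<^sub>M prob_algebra borel" and f: "is_reward d0 f" and g: "is_reward d0 g"
  shows "(\<lambda>x. cond_pref_loss (\<pi>0 x) K (f x) (g x)) \<in> borel_measurable d0"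
proof -
  have [measurable]: "(\<lambda>(x, A). h x (A i)) \<in> borel_measurable (d0 \<Otimes>\<^sub>M PiM {..<K} (\<lambda>_. borel))"
    if "is_reward d0 h" "i \<in> {..<K}" for h i
  proof -
    have "(\<lambda>(x, A). (x, A i)) \<in> d0 \<Otimes>\<^sub>M PiM {..<K} (\<lambda>_. borel) \<rightarrow>\<^sub>M d0 \<Otimes>\<^sub>M borel"
      using that(2) by measurable
    from measurable_compose[OF this that(1)[unfolded is_reward_def]] show ?thesis
      by (simp add: case_prod_beta comp_def)
  qed
  have "(\<lambda>(x, A). ennreal (expected_ce K (\<lambda>i. f x (A i)) (\<lambda>i. g x (A i))))
          \<in> borel_measurable (d0 \<Otimes>\<^sub>M PiM {..<K} (\<lambda>_. borel))"
    using f g unfolding expected_ce_def softmax_prob_def ce_loss_def by measurable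
  from nn_integral_measurable_subprob_algebra2[OF this
      measurable_prob_algebraD[OF measurable_PiM_kernel[OF \<pi>0 finite_lessThan]]]
  show ?thesis unfolding cond_pref_loss_def by simp
qed

lemma argmax_eq_of_margin:
  assumes a: "a \<in> S" "\<forall>c\<in>S. c \<noteq> a \<longrightarrow> \<phi> c \<le> \<phi> a - \<Delta>"
    and b: "is_argmax_on S \<psi> b" and close: "\<forall>c\<in>S. \<bar>\<phi> c - \<psi> c\<bar> < \<Delta> / 2"
  shows "b = a"
proof (rule ccontr)
  assume "b \<noteq> a"
  then have "\<phi> b \<le> \<phi> a - \<Delta>" "\<psi> a \<le> \<psi> b" using a b by (auto simp: is_argmax_on_def)
  moreover have "\<bar>\<phi> a - \<psi> a\<bar> < \<Delta> / 2" "\<bar>\<phi> b - \<psi> b\<bar> < \<Delta> / 2"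
    using a b close by (auto simp: is_argmax_on_def)
  ultimately show False unfolding abs_less_iff by linarith
qed

text \<open>The radius for which the bounds of \<open>pref_loss_perturb\<close> below keep half of an
  excess \<open>\<delta>\<close> of the loss over its minimum \<open>a\<close>.\<close>

lemma exists_radius_for_perturbed_gap:
  fixes a \<delta> :: real
  assumes "0 < \<delta>"
  shows "\<exists>r>0. exp (2*r) * a + 2*r + \<delta>/2 \<le> exp (-2*r) * (a + \<delta>) - 2*r"
proof -
  let ?\<phi> = "\<lambda>r::real. exp (-2*r) * (a + \<delta>) - 2*r - (exp (2*r) * a + 2*r + \<delta>/2)"
  have "(?\<phi> \<longlongrightarrow> ?\<phi> 0) (at_right 0)" by (intro tendsto_intros)
  moreover have "0 < ?\<phi> 0" using assms by simp
  ultimately have "eventually (\<lambda>r. 0 < ?\<phi> r) (at_right 0)"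
    by (rule order_tendstoD(1))
  then obtain b where "0 < b" and pos: "\<And>r. 0 < r \<Longrightarrow> r < b \<Longrightarrow> 0 < ?\<phi> r"
    unfolding eventually_at_right_field by auto
  then have "0 < ?\<phi> (b/2)" by (intro pos) auto
  with \<open>0 < b\<close> show ?thesis by (intro exI[of _ "b/2"]) auto
qed

locale separated_reward_class =
  fixes d0 :: "'x measure"
    and \<pi>0 :: "'x \<Rightarrow> 'a::{metric_space, second_countable_topology} measure"
    and F :: "('x \<Rightarrow> 'a \<Rightarrow> real) set"
    and tb :: "('x \<Rightarrow> 'a \<Rightarrow> real) \<Rightarrow> 'x \<Rightarrow> 'a"
    and K :: nat
    and \<Delta> :: real
  assumes d0: "prob_space d0"
    and kernel: "\<pi>0 \<in> d0 \<rightarrow>\<^sub>M prob_algebra borel"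
    and reward: "\<And>f. f \<in> F \<Longrightarrow> is_reward d0 f"
    and measurable_tb: "\<And>f. f \<in> F \<Longrightarrow> tb f \<in> d0 \<rightarrow>\<^sub>M borel"
    and tb_argmax: "\<And>f x. f \<in> F \<Longrightarrow> x \<in> space d0 \<Longrightarrow> is_argmax_on (supp (\<pi>0 x)) (f x) (tb f x)"
    and continuous: "\<And>f. f \<in> F \<Longrightarrow> AE x in d0. continuous_on (supp (\<pi>0 x)) (f x)"
    and margin_pos: "0 < \<Delta>"
    and margin: "\<And>f. f \<in> F \<Longrightarrow>
      AE x in d0. \<forall>b\<in>supp (\<pi>0 x). b \<noteq> tb f x \<longrightarrow> f x b \<le> f x (tb f x) - \<Delta>"
    and K: "2 \<le> K"
begin

lemma sets_\<pi>0: "x \<in> space d0 \<Longrightarrow> sets (\<pi>0 x) = sets borel"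
  and prob_space_\<pi>0: "x \<in> space d0 \<Longrightarrow> prob_space (\<pi>0 x)"
  using measurable_space[OF kernel] by (auto simp: space_prob_algebra)

lemma measurable_section:
  "f \<in> F \<Longrightarrow> x \<in> space d0 \<Longrightarrow> f x \<in> borel_measurable (\<pi>0 x)"
  using measurable_reward_section[OF reward] sets_\<pi>0 by (simp cong: measurable_cong_sets)

lemma exists_supp_point: obtains x a where "x \<in> space d0" "a \<in> supp (\<pi>0 x)"
proof -
  obtain x where x: "x \<in> space d0" using prob_space.not_empty[OF d0] by auto
  then show ?thesis using supp_nonempty[OF prob_space_\<pi>0 sets_\<pi>0] that by blast
qed

lemma AE_close_of_supp_dist_less:
  assumes "supp_dist d0 \<pi>0 f f' < ereal r" "x \<in> space d0"
  shows "AE a in \<pi>0 x. \<bar>f' x a - f x a\<bar> \<le> r"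
  using AE_in_supp[OF sets_\<pi>0[OF assms(2)]]
proof eventually_elim
  case (elim a)
  then show ?case using supp_dist_lessD[OF assms elim] by (simp add: abs_minus_commute)
qed

lemma pref_loss_self_le_ln: "pref_loss d0 \<pi>0 K f f \<le> ennreal (ln K)"
proof -
  have "pref_loss d0 \<pi>0 K f f \<le> (\<integral>\<^sup>+ x. ennreal (ln K) \<partial>d0)"
    unfolding pref_loss_eq_cond_pref_loss using prob_space_\<pi>0 K
    by (intro nn_integral_mono cond_pref_loss_self_le_ln) auto
  then show ?thesis using prob_space.emeasure_space_1[OF d0] by simp
qed

lemma pref_loss_perturb:
  assumes "f \<in> F" "g \<in> F" "f' \<in> F" "g' \<in> F" "0 \<le> r"
    and close: "supp_dist d0 \<pi>0 f f' < ereal r" "supp_dist d0 \<pi>0 g g' < ereal r"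
  shows pref_loss_perturb_ge:
      "ennreal (exp (-2*r)) * pref_loss d0 \<pi>0 K f g \<le> pref_loss d0 \<pi>0 K f' g' + ennreal (2*r)"
    and pref_loss_perturb_le:
      "pref_loss d0 \<pi>0 K f' g' \<le> ennreal (exp (2*r)) * pref_loss d0 \<pi>0 K f g + ennreal (2*r)"
proof -
  note [measurable] = measurable_cond_pref_loss[OF kernel reward reward, OF assms(1,2)]
    measurable_cond_pref_loss[OF kernel reward reward, OF assms(3,4)]
  have pointwise: "ennreal (exp (-2*r)) * cond_pref_loss (\<pi>0 x) K (f x) (g x)
                     \<le> cond_pref_loss (\<pi>0 x) K (f' x) (g' x) + ennreal (2*r)"
    "cond_pref_loss (\<pi>0 x) K (f' x) (g' x)
       \<le> ennreal (exp (2*r)) * cond_pref_loss (\<pi>0 x) K (f x) (g x) + ennreal (2*r)"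
    if x: "x \<in> space d0" for x
    using cond_pref_loss_perturb[OF prob_space_\<pi>0[OF x] _ \<open>0 \<le> r\<close>] K
      measurable_section[OF _ x] assms(1-4)
      AE_close_of_supp_dist_less[OF close(1) x] AE_close_of_supp_dist_less[OF close(2) x]
    by (auto intro: eventually_conj)
  let ?L = "\<lambda>f g x. cond_pref_loss (\<pi>0 x) K (f x) (g x)"
  have const: "(\<integral>\<^sup>+ x. ennreal (2*r) \<partial>d0) = ennreal (2*r)"
    using prob_space.emeasure_space_1[OF d0] by simp
  have "ennreal (exp (-2*r)) * pref_loss d0 \<pi>0 K f g = (\<integral>\<^sup>+ x. ennreal (exp (-2*r)) * ?L f g x \<partial>d0)"
    unfolding pref_loss_eq_cond_pref_loss by (simp add: nn_integral_cmult)
  also have "\<dots> \<le> (\<integral>\<^sup>+ x. ?L f' g' x + ennreal (2*r) \<partial>d0)"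
    using pointwise(1) by (intro nn_integral_mono)
  also have "\<dots> = pref_loss d0 \<pi>0 K f' g' + ennreal (2*r)"
    unfolding pref_loss_eq_cond_pref_loss using const by (simp add: nn_integral_add)
  finally show "ennreal (exp (-2*r)) * pref_loss d0 \<pi>0 K f g \<le> pref_loss d0 \<pi>0 K f' g' + ennreal (2*r)" .
  have "pref_loss d0 \<pi>0 K f' g' \<le> (\<integral>\<^sup>+ x. ennreal (exp (2*r)) * ?L f g x + ennreal (2*r) \<partial>d0)"
    unfolding pref_loss_eq_cond_pref_loss using pointwise(2) by (intro nn_integral_mono)
  also have "\<dots> = ennreal (exp (2*r)) * pref_loss d0 \<pi>0 K f g + ennreal (2*r)"
    unfolding pref_loss_eq_cond_pref_loss using const by (simp add: nn_integral_add nn_integral_cmult)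
  finally show "pref_loss d0 \<pi>0 K f' g' \<le> ennreal (exp (2*r)) * pref_loss d0 \<pi>0 K f g + ennreal (2*r)" .
qed


lemma pref_loss_self_less:
  assumes f: "f \<in> F" and g: "g \<in> F" and gap: "0 < subopt_gap d0 tb f g"
  shows "pref_loss d0 \<pi>0 K f f < pref_loss d0 \<pi>0 K f g"
  unfolding pref_loss_eq_cond_pref_loss
proof (rule nn_integral_less)
  let ?L = "\<lambda>g x. cond_pref_loss (\<pi>0 x) K (f x) (g x)"
  show "?L f \<in> borel_measurable d0" "?L g \<in> borel_measurable d0"
    using measurable_cond_pref_loss[OF kernel reward reward] f g by auto
  show "(\<integral>\<^sup>+ x. ?L f x \<partial>d0) \<noteq> \<infinity>"
    using pref_loss_self_le_ln[of f] unfolding pref_loss_eq_cond_pref_loss by (auto simp: top_unique)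
  show "AE x in d0. ?L f x \<le> ?L g x"
    using K by (intro AE_I2 cond_pref_loss_self_le) auto
  show "\<not> (AE x in d0. ?L g x \<le> ?L f x)"
  proof
    assume "AE x in d0. ?L g x \<le> ?L f x"
    then have "AE x in d0. tb g x = tb f x"
      using AE_space margin[OF f] continuous[OF f] continuous[OF g]
    proof eventually_elim
      case (elim x)
      show ?case
      proof (rule ccontr)
        assume ne: "tb g x \<noteq> tb f x"
        \<comment> \<open>distinct argmaxes make \<open>g x - f x\<close> non-constant on the support\<close>
        have a: "tb f x \<in> supp (\<pi>0 x)" and b: "tb g x \<in> supp (\<pi>0 x)"
          and "g x (tb f x) \<le> g x (tb g x)"
          using tb_argmax f g elim(2) by (auto simp: is_argmax_on_def)
        moreover have "f x (tb g x) \<le> f x (tb f x) - \<Delta>" using elim(3) ne b by blast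
        ultimately have "g x (tb f x) - f x (tb f x) \<noteq> g x (tb g x) - f x (tb g x)"
          using margin_pos by linarith
        moreover have "continuous_on (supp (\<pi>0 x)) (\<lambda>c. g x c - f x c)"
          using elim by (intro continuous_intros) auto
        ultimately have "?L f x < ?L g x"
          using cond_pref_loss_self_less[OF prob_space_\<pi>0 sets_\<pi>0 K
              measurable_section measurable_section _ a b] f g elim(2) by blast
        then show False using elim(1) by simp
      qed
    qed
    then have "subopt_gap d0 tb f g = (\<integral>\<^sup>+ x. 0 \<partial>d0)"
      unfolding subopt_gap_def by (intro nn_integral_cong_AE) auto
    then show False using gap by simp
  qed
qed

lemma tb_eq_of_supp_dist_less:
  assumes f: "f \<in> F" and f': "f' \<in> F" and close: "supp_dist d0 \<pi>0 f f' < ereal (\<Delta> / 2)"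
  shows "AE x in d0. tb f' x = tb f x"
  using AE_space margin[OF f]
proof eventually_elim
  case (elim x)
  show ?case
  proof (rule argmax_eq_of_margin)
    show "tb f x \<in> supp (\<pi>0 x)" "is_argmax_on (supp (\<pi>0 x)) (f' x) (tb f' x)"
      using tb_argmax[OF f elim(1)] tb_argmax[OF f' elim(1)] by (auto simp: is_argmax_on_def)
  qed (use elim supp_dist_lessD[OF close elim(1)] in auto)
qed

lemma subopt_gap_perturb:
  assumes f: "f \<in> F" and g: "g \<in> F" and f': "f' \<in> F" and g': "g' \<in> F"
    and r: "0 \<le> r" "r \<le> \<Delta> / 2"
    and close: "supp_dist d0 \<pi>0 f f' < ereal r" "supp_dist d0 \<pi>0 g g' < ereal r"
  shows "subopt_gap d0 tb f' g' \<le> subopt_gap d0 tb f g + ennreal (2*r)"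
proof -
  have "supp_dist d0 \<pi>0 f f' < ereal (\<Delta> / 2)" "supp_dist d0 \<pi>0 g g' < ereal (\<Delta> / 2)"
    using close r(2) by (meson ereal_less_eq(3) order.strict_trans2)+
  then have "AE x in d0. tb f' x = tb f x" "AE x in d0. tb g' x = tb g x"
    using tb_eq_of_supp_dist_less f g f' g' by blast+
  then have "AE x in d0. ennreal (f' x (tb f' x) - f' x (tb g' x))
               \<le> ennreal (f x (tb f x) - f x (tb g x)) + ennreal (2*r)"
    using AE_space
  proof eventually_elim
    case (elim x)
    have a: "tb f x \<in> supp (\<pi>0 x)" and b: "tb g x \<in> supp (\<pi>0 x)"
      and nonneg: "0 \<le> f x (tb f x) - f x (tb g x)"
      using tb_argmax[OF f elim(3)] tb_argmax[OF g elim(3)] by (auto simp: is_argmax_on_def)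
    have "\<bar>f x (tb f x) - f' x (tb f x)\<bar> < r" "\<bar>f x (tb g x) - f' x (tb g x)\<bar> < r"
      using supp_dist_lessD[OF close(1) elim(3) a] supp_dist_lessD[OF close(1) elim(3) b] .
    then have "f' x (tb f' x) - f' x (tb g' x) \<le> (f x (tb f x) - f x (tb g x)) + 2*r"
      using elim(1,2) unfolding abs_less_iff by simp
    then have "ennreal (f' x (tb f' x) - f' x (tb g' x)) \<le> ennreal ((f x (tb f x) - f x (tb g x)) + 2*r)"
      by (rule ennreal_leI)
    also have "\<dots> = ennreal (f x (tb f x) - f x (tb g x)) + ennreal (2*r)"
      using nonneg r by (intro ennreal_plus) auto
    finally show ?case .
  qed
  then have "subopt_gap d0 tb f' g' \<le> (\<integral>\<^sup>+ x. ennreal (f x (tb f x) - f x (tb g x)) + ennreal (2*r) \<partial>d0)"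
    unfolding subopt_gap_def by (rule nn_integral_mono_AE)
  also have "\<dots> = subopt_gap d0 tb f g + ennreal (2*r)"
    unfolding subopt_gap_def using prob_space.emeasure_space_1[OF d0]
      measurable_reward_comp[OF reward measurable_tb] f g
    by (subst nn_integral_add) auto
  finally show ?thesis .
qed


lemma subopt_gap_less_near:
  assumes f: "f \<in> F" and g: "g \<in> F" and small: "subopt_gap d0 tb f g < ennreal \<epsilon>"
  shows "\<exists>r>0. \<forall>f'\<in>F. \<forall>g'\<in>F. supp_dist d0 \<pi>0 f f' < ereal r \<longrightarrow> supp_dist d0 \<pi>0 g g' < ereal r \<longrightarrow>
           subopt_gap d0 tb f' g' < ennreal \<epsilon>"
proof -
  obtain t where t: "subopt_gap d0 tb f g = ennreal t" "0 \<le> t" "t < \<epsilon>"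
    using small by (cases "subopt_gap d0 tb f g") (auto simp: ennreal_less_iff)
  define r where "r = min (\<Delta> / 2) ((\<epsilon> - t) / 4)"
  have "r \<le> (\<epsilon> - t) / 4" unfolding r_def by (rule min.cobounded2)
  then have r: "0 < r" "r \<le> \<Delta> / 2" "t + 2*r < \<epsilon>"
    using margin_pos t by (auto simp: r_def)
  show ?thesis
  proof (intro exI[of _ r] conjI ballI impI)
    fix f' g' assume f': "f' \<in> F" and g': "g' \<in> F"
      and close: "supp_dist d0 \<pi>0 f f' < ereal r" "supp_dist d0 \<pi>0 g g' < ereal r"
    have "subopt_gap d0 tb f' g' \<le> subopt_gap d0 tb f g + ennreal (2*r)"
      using r by (intro subopt_gap_perturb[OF f g f' g' _ _ close]) auto
    also have "\<dots> = ennreal (t + 2*r)"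
      using t r by (simp add: ennreal_plus)
    also have "\<dots> < ennreal \<epsilon>"
      using t r by (subst ennreal_less_iff) auto
    finally show "subopt_gap d0 tb f' g' < ennreal \<epsilon>" .
  qed (rule r(1))
qed

lemma excess_pref_loss_near:
  assumes f: "f \<in> F" and g: "g \<in> F" and less: "pref_loss d0 \<pi>0 K f f < pref_loss d0 \<pi>0 K f g"
  shows "\<exists>r>0. \<exists>\<gamma>>0. \<forall>f'\<in>F. \<forall>g'\<in>F. supp_dist d0 \<pi>0 f f' < ereal r \<longrightarrow> supp_dist d0 \<pi>0 g g' < ereal r \<longrightarrow>
           pref_loss d0 \<pi>0 K f' f' + ennreal \<gamma> \<le> pref_loss d0 \<pi>0 K f' g'"
proof -
  obtain a where a: "pref_loss d0 \<pi>0 K f f = ennreal a" "0 \<le> a"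
    using pref_loss_self_le_ln[of f] by (cases "pref_loss d0 \<pi>0 K f f") (auto simp: top_unique)
  obtain \<delta> where \<delta>: "0 < \<delta>" "ennreal (a + \<delta>) \<le> pref_loss d0 \<pi>0 K f g"
  proof (cases "pref_loss d0 \<pi>0 K f g")
    case (real b)
    then show ?thesis using less a by (intro that[of "b - a"]) (auto simp: ennreal_less_iff)
  qed (use that[of 1] in simp)
  obtain r where r: "0 < r" "exp (2*r) * a + 2*r + \<delta>/2 \<le> exp (-2*r) * (a + \<delta>) - 2*r"
    using exists_radius_for_perturbed_gap[OF \<delta>(1)] by blast
  show ?thesis
  proof (rule exI[of _ r], intro conjI exI[of _ "\<delta>/2"] ballI impI)
    fix f' g' assume f': "f' \<in> F" and g': "g' \<in> F"
      and close: "supp_dist d0 \<pi>0 f f' < ereal r" "supp_dist d0 \<pi>0 g g' < ereal r"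
    have "ennreal (exp (-2*r) * (a + \<delta>)) \<le> ennreal (exp (-2*r)) * pref_loss d0 \<pi>0 K f g"
      using \<delta> a by (simp add: ennreal_mult mult_left_mono)
    also have "\<dots> \<le> pref_loss d0 \<pi>0 K f' g' + ennreal (2*r)"
      using pref_loss_perturb_ge[OF f g f' g' _ close] r by simp
    finally have upper: "ennreal (exp (-2*r) * (a + \<delta>) - 2*r) \<le> pref_loss d0 \<pi>0 K f' g'"
      using r by (simp add: ennreal_minus[symmetric] ennreal_minus_le_iff add.commute)
    have "pref_loss d0 \<pi>0 K f' f' \<le> ennreal (exp (2*r) * a + 2*r)"
      using pref_loss_perturb_le[OF f f f' f' _ close(1) close(1)] r a
      by (simp add: ennreal_mult ennreal_plus)
    then have "pref_loss d0 \<pi>0 K f' f' + ennreal (\<delta>/2) \<le> ennreal (exp (2*r) * a + 2*r + \<delta>/2)"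
      using r a \<delta> by (simp add: ennreal_plus add_right_mono)
    also have "\<dots> \<le> ennreal (exp (-2*r) * (a + \<delta>) - 2*r)"
      using r(2) by (rule ennreal_leI)
    finally show "pref_loss d0 \<pi>0 K f' f' + ennreal (\<delta>/2) \<le> pref_loss d0 \<pi>0 K f' g'"
      using upper by (rule order_trans)
  qed (use r \<delta> in auto)
qed

lemma excess_pref_loss_locally_bounded_below:
  assumes f: "f \<in> F" and g: "g \<in> F" and \<epsilon>: "0 < \<epsilon>"
  shows "\<exists>r>0. \<exists>\<gamma>>0. \<forall>f'\<in>F. \<forall>g'\<in>F. supp_dist d0 \<pi>0 f f' < ereal r \<longrightarrow> supp_dist d0 \<pi>0 g g' < ereal r \<longrightarrow>
           ennreal \<epsilon> \<le> subopt_gap d0 tb f' g' \<longrightarrow> pref_loss d0 \<pi>0 K f' f' + ennreal \<gamma> \<le> pref_loss d0 \<pi>0 K f' g'"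
proof (cases "subopt_gap d0 tb f g < ennreal \<epsilon>")
  case True
  then obtain r where "0 < r" and near: "\<forall>f'\<in>F. \<forall>g'\<in>F. supp_dist d0 \<pi>0 f f' < ereal r \<longrightarrow>
      supp_dist d0 \<pi>0 g g' < ereal r \<longrightarrow> subopt_gap d0 tb f' g' < ennreal \<epsilon>"
    using subopt_gap_less_near[OF f g] by blast
  show ?thesis
    using near by (intro exI[of _ r] conjI exI[of _ 1] \<open>0 < r\<close>) (auto dest: leD)
next
  case False
  then have "ennreal \<epsilon> \<le> subopt_gap d0 tb f g" by simp
  with \<epsilon> have "0 < subopt_gap d0 tb f g"
    by (auto intro: order.strict_trans2[of 0 "ennreal \<epsilon>"])
  from excess_pref_loss_near[OF f g pref_loss_self_less[OF f g this]]
  show ?thesis by blast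
qed

lemma uniform_excess_pref_loss_bound:
  assumes compact: "supp_compact d0 \<pi>0 F" and \<epsilon>: "0 < \<epsilon>"
  shows "\<exists>\<gamma>>0. \<forall>f\<in>F. \<forall>g\<in>F. ennreal \<epsilon> \<le> subopt_gap d0 tb f g \<longrightarrow>
           pref_loss d0 \<pi>0 K f f + ennreal \<gamma> \<le> pref_loss d0 \<pi>0 K f g"
proof -
  define P where "P p \<gamma> \<longleftrightarrow> (ennreal \<epsilon> \<le> subopt_gap d0 tb (fst p) (snd p) \<longrightarrow>
      pref_loss d0 \<pi>0 K (fst p) (fst p) + ennreal \<gamma> \<le> pref_loss d0 \<pi>0 K (fst p) (snd p))" for p \<gamma>
  let ?d = "\<lambda>p q. max (supp_dist d0 \<pi>0 (fst p) (fst q)) (supp_dist d0 \<pi>0 (snd p) (snd q))"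
  obtain x a where "x \<in> space d0" "a \<in> supp (\<pi>0 x)" by (rule exists_supp_point)
  then have "ball_compact ?d (F \<times> F)"
    using compact by (intro ball_compact_Times ball_compact_supp_dist)
  then have "\<exists>\<gamma>>0. \<forall>p\<in>F \<times> F. P p \<gamma>"
  proof (rule ball_compact_uniform)
    fix p assume "p \<in> F \<times> F"
    then obtain r \<gamma> where "0 < r" "0 < \<gamma>"
      and "\<forall>f'\<in>F. \<forall>g'\<in>F. supp_dist d0 \<pi>0 (fst p) f' < ereal r \<longrightarrow> supp_dist d0 \<pi>0 (snd p) g' < ereal r \<longrightarrow>
             P (f', g') \<gamma>"
      using excess_pref_loss_locally_bounded_below[OF _ _ \<epsilon>, of "fst p" "snd p"]
      unfolding P_def by auto
    then show "\<exists>r>0. \<exists>\<gamma>>0. \<forall>q\<in>F \<times> F. ?d p q < ereal r \<longrightarrow> P q \<gamma>"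
      by (intro exI[of _ r] exI[of _ \<gamma>] conjI) auto
  next
    fix p \<gamma> \<gamma>' assume "P p \<gamma>" "\<gamma>' \<le> \<gamma>"
    then show "P p \<gamma>'"
      unfolding P_def using add_left_mono[OF ennreal_leI] order_trans by blast
  qed
  then show ?thesis unfolding P_def by auto
qed

end

theorem lemma3:
  fixes d0 :: "'x measure"
    and \<pi>0 :: "'x \<Rightarrow> 'a::{metric_space, second_countable_topology} measure"
    and \<P> :: "'p set"
    and Rp :: "'p \<Rightarrow> 'x \<Rightarrow> 'a \<Rightarrow> real"
    and tb :: "('x \<Rightarrow> 'a \<Rightarrow> real) \<Rightarrow> 'x \<Rightarrow> 'a"
    and K :: nat
    and \<epsilon>0 :: real
  assumes d0: "prob_space d0"
    and kernel: "\<pi>0 \<in> d0 \<rightarrow>\<^sub>M prob_algebra borel"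
    and rewards: "\<forall>p\<in>\<P>. is_reward d0 (Rp p) \<and> centered d0 \<pi>0 (Rp p)"
    and tiebreak: "\<forall>R\<in>Rp ` \<P>. tb R \<in> d0 \<rightarrow>\<^sub>M borel \<and>
                     (\<forall>x\<in>space d0. is_argmax_on (supp (\<pi>0 x)) (R x) (tb R x))"
    and C1_compact: "supp_compact d0 \<pi>0 (Rp ` \<P>)"
    and C1_cont: "\<forall>R\<in>Rp ` \<P>. AE x in d0. continuous_on (supp (\<pi>0 x)) (R x)"
    and C2: "\<exists>\<Delta>>0. \<forall>p\<in>\<P>. AE x in d0.
               (\<forall>b\<in>supp (\<pi>0 x). b \<noteq> tb (Rp p) x \<longrightarrow>
                   Rp p x b \<le> Rp p x (tb (Rp p) x) - \<Delta>)"
    and K: "K \<ge> 2"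
    and eps: "\<epsilon>0 > 0"
  shows "\<exists>\<gamma>>0. \<forall>p\<in>\<P>. \<forall>q\<in>\<P>.
           subopt_gap d0 tb (Rp p) (Rp q) \<ge> ennreal \<epsilon>0 \<longrightarrow>
           pref_loss d0 \<pi>0 K (Rp p) (Rp q) \<ge> pref_loss d0 \<pi>0 K (Rp p) (Rp p) + ennreal \<gamma>"
proof -
  obtain \<Delta> where \<Delta>: "0 < \<Delta>" "\<forall>p\<in>\<P>. AE x in d0.
      \<forall>b\<in>supp (\<pi>0 x). b \<noteq> tb (Rp p) x \<longrightarrow> Rp p x b \<le> Rp p x (tb (Rp p) x) - \<Delta>"
    using C2 by blast
  have reward: "\<And>f. f \<in> Rp ` \<P> \<Longrightarrow> is_reward d0 f"
    using rewards by blast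
  have tb: "\<And>f. f \<in> Rp ` \<P> \<Longrightarrow> tb f \<in> d0 \<rightarrow>\<^sub>M borel"
    "\<And>f x. f \<in> Rp ` \<P> \<Longrightarrow> x \<in> space d0 \<Longrightarrow> is_argmax_on (supp (\<pi>0 x)) (f x) (tb f x)"
    using tiebreak by blast+
  have continuous: "\<And>f. f \<in> Rp ` \<P> \<Longrightarrow> AE x in d0. continuous_on (supp (\<pi>0 x)) (f x)"
    using C1_cont by blast
  have margin: "\<And>f. f \<in> Rp ` \<P> \<Longrightarrow>
      AE x in d0. \<forall>b\<in>supp (\<pi>0 x). b \<noteq> tb f x \<longrightarrow> f x b \<le> f x (tb f x) - \<Delta>"
    using \<Delta>(2) by blast
  interpret separated_reward_class d0 \<pi>0 "Rp ` \<P>" tb K \<Delta>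
    using separated_reward_class.intro[OF d0 kernel reward tb continuous \<Delta>(1) margin K] .
  obtain \<gamma> where "0 < \<gamma>" and bound: "\<And>f g. f \<in> Rp ` \<P> \<Longrightarrow> g \<in> Rp ` \<P> \<Longrightarrow>
      ennreal \<epsilon>0 \<le> subopt_gap d0 tb f g \<Longrightarrow> pref_loss d0 \<pi>0 K f f + ennreal \<gamma> \<le> pref_loss d0 \<pi>0 K f g"
    using uniform_excess_pref_loss_bound[OF C1_compact eps] by blast
  show ?thesis
    using bound \<open>0 < \<gamma>\<close> by (intro exI[of _ \<gamma>]) auto
qed

end
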